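(* Let $\gamma \ge 0$ be a random variable (the channel power gain) with probability density function $f_\gamma$, let $\mathbb{E}[\cdot]$ denote expectation over $\gamma$, and fix constants $\theta>0$, $\beta>0$, $\bar P_\tau>0$ and $0<\tau<T$. Consider the optimization problem (P3) over sampling-rate functions $\lambda(\gamma)$: $$\min_{\lambda(\cdot)} \ \mathbb{E}\!\left[\lambda(\gamma)\left(\beta e^{\theta/\lambda(\gamma)}-1\right)\right]\quad\text{s.t.}\quad \mathbb{E}\!\left[\frac{\lambda(\gamma)}{\gamma}\right]\le \bar P_\tau,\qquad \tau\lambda(\gamma)\le 1,\qquad T\lambda(\gamma)\ge 1 .$$ Then the optimal sampling scheme $\lambda_{\rm opt}(\gamma)$ for this problem is $$\lambda_{\rm opt}(\gamma)=\begin{cases}\dfrac{1}{T}, & 0\le \gamma<\gamma_1^{\rm th},\\[2mm] \dfrac{\theta}{1+\mathcal{W}\!\left(\frac{\eta-\gamma}{e\beta\gamma}\right)}, & \gamma_1^{\rm th}\le\gamma\le\gamma_2^{\rm th},\\[2mm] \dfrac{1}{\tau}, & \gamma>\gamma_2^{\rm th},\end{cases}$$ where $\mathcal{W}(\cdot)$ is the Lambert W function (the inverse of $x\mapsto xe^x$), the thresholds are $$\gamma_1^{\rm th}=\frac{\eta}{1-\beta e^{\theta T}(1-\theta T)},\qquad \gamma_2^{\rm th}=\frac{\eta}{1-\beta e^{\theta\tau}(1-\theta\tau)},$$ and the constant $\eta$ is determined by $\mathbb{E}\!\left[\lambda_{\rm opt}(\gamma)/\gamma\right]=\bar P_\ta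u$.
   Context: This arises in a status-update system over a block-fading channel with coherence time $T$, packet transmission time $\tau$, and AoI exponent $\theta$. The problem (P3) is the Dinkelbach transform of minimizing $\mathbb{E}[e^{\theta/\lambda(\gamma)}\lambda(\gamma)]/\mathbb{E}[\lambda(\gamma)]$ under the same constraints, with $\beta$ an auxiliary parameter; here $\bar P_\tau=\bar P/(\tau(e^{D\log 2/(\tau B)}-1))$ for average power $\bar P$, packet size $D$ bits and bandwidth $B$, but for the statement $\bar P_\tau$ is simply a positive constant. *)

theory Defs
  imports "HOL-Analysis.Analysis"
begin

definition lambertW :: "real \<Rightarrow> real" where
  "lambertW y = (THE w. -1 \<le> w \<and> w * exp w = y)"

text \<open>Thresholds gamma_th(t) = eta / (1 - beta e^(theta t) (1 - theta t)); gamma_1 uses t = T, gamma_2 uses t = tau.\<close>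
definition gamma_th :: "real \<Rightarrow> real \<Rightarrow> real \<Rightarrow> real \<Rightarrow> real" where
  "gamma_th \<theta> \<beta> \<eta> t = \<eta> / (1 - \<beta> * exp (\<theta> * t) * (1 - \<theta> * t))"

definition lambda_opt :: "real \<Rightarrow> real \<Rightarrow> real \<Rightarrow> real \<Rightarrow> real \<Rightarrow> real \<Rightarrow> real" where
  "lambda_opt \<theta> \<beta> \<eta> \<tau> T \<gamma> =
     (if \<gamma> < gamma_th \<theta> \<beta> \<eta> T then 1 / T
      else if \<gamma> \<le> gamma_th \<theta> \<beta> \<eta> \<tau>
        then \<theta> / (1 + lambertW ((\<eta> - \<gamma>) / (exp 1 * \<beta> * \<gamma>)))
      else 1 / \<tau>)"

text \<open>Expectation over gamma, whose law has Lebesgue density f (f vanishes on the negative reals).\<close>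
definition expect :: "(real \<Rightarrow> real) \<Rightarrow> (real \<Rightarrow> real) \<Rightarrow> real" where
  "expect f g = (\<integral>x. g x * f x \<partial>lborel)"

definition feasible :: "(real \<Rightarrow> real) \<Rightarrow> real \<Rightarrow> real \<Rightarrow> real \<Rightarrow> (real \<Rightarrow> real) \<Rightarrow> bool" where
  "feasible f P\<tau> \<tau> T lam \<longleftrightarrow>
     lam \<in> borel_measurable borel \<and>
     (\<forall>x>0. \<tau> * lam x \<le> 1 \<and> 1 \<le> T * lam x) \<and>
     (\<integral>\<^sup>+x. ennreal (lam x / x * f x) \<partial>lborel) \<le> ennreal P\<tau>"

definition obj :: "real \<Rightarrow> real \<Rightarrow> real \<Rightarrow> real" where
  "obj \<theta> \<beta> l = l * (\<beta> * exp (\<theta> / l) - 1)"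

end

theory Submission
  imports Defs
begin

(* Lagrangian relaxation of the power constraint with multiplier \<eta> \<ge> 0. The integrand obj \<theta> \<beta>
   is convex on (0, \<infinity>), so for a gain x > 0 the function l \<mapsto> obj l + (\<eta>/x) l is minimised
   over [1/T, 1/\<tau>] at the lower end when its derivative there is nonnegative (x < \<gamma>1), at the
   upper end when its derivative there is negative (x > \<gamma>2), and otherwise at the stationary
   point, which the substitution \<theta>/l = 1 + w turns into w e^w = (\<eta> - x)/(e \<beta> x), a Lambert W
   value. Integrating against f, and using that \<lambda>_opt meets the power constraint with equality,
   E[obj \<lambda>_opt] + \<eta> P \<le> E[obj \<lambda>] + \<eta> E[\<lambda>/\<gamma>] \<le> E[obj \<lambda>] + \<eta> P for every feasible \<lambda>.
   Measurability of \<lambda>_opt holds because minimisers of obj l + c l decrease in c, so \<lambda>_opt is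
   monotone in x on (0, \<infinity>). *)

lemma mult_exp_strict_mono:
  fixes a b :: real
  assumes "-1 \<le> a" "a < b"
  shows "a * exp a < b * exp b"
proof (rule DERIV_pos_imp_increasing_open[OF assms(2)])
  fix x :: real
  assume "a < x" "x < b"
  then show "\<exists>y. DERIV (\<lambda>w. w * exp w) x :> y \<and> 0 < y"
  proof (intro exI conjI)
    show "DERIV (\<lambda>w. w * exp w) x :> (1 + x) * exp x"
      by (auto intro!: derivative_eq_intros simp: algebra_simps)
    show "0 < (1 + x) * exp x"
      using \<open>a < x\<close> assms(1) by simp
  qed
qed (intro continuous_intros)

lemma lambertW_mult_exp:
  fixes w :: real
  assumes "-1 \<le> w"
  shows "lambertW (w * exp w) = w"
  unfolding lambertW_def
proof (rule the_equality)
  fix v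
  assume v: "-1 \<le> v \<and> v * exp v = w * exp w"
  show "v = w"
    using mult_exp_strict_mono[of v w] mult_exp_strict_mono[of w v] v assms
    by (cases v w rule: linorder_cases) auto
qed (use assms in simp)

lemma lambertW_between:
  fixes a b y :: real
  assumes "-1 \<le> a" "a \<le> b" "a * exp a \<le> y" "y \<le> b * exp b"
  shows "a \<le> lambertW y" "lambertW y \<le> b" "lambertW y * exp (lambertW y) = y"
proof -
  have "\<exists>w. a \<le> w \<and> w \<le> b \<and> w * exp w = y"
    by (rule IVT') (auto simp: assms intro!: continuous_intros)
  then obtain w where w: "a \<le> w" "w \<le> b" "w * exp w = y"
    by blast
  then have "lambertW y = w"
    using lambertW_mult_exp[of w] assms(1) by simp
  with w show "a \<le> lambertW y" "lambertW y \<le> b" "lambertW y * exp (lambertW y) = y"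
    by simp_all
qed

lemma exp_mult_one_minus_antimono:
  fixes s t :: real
  assumes "0 \<le> s" "s \<le> t"
  shows "exp t * (1 - t) \<le> exp s * (1 - s)"
proof (rule DERIV_nonpos_imp_decreasing_open[OF assms(2)])
  fix x :: real
  assume "s < x" "x < t"
  then show "\<exists>y. DERIV (\<lambda>u. exp u * (1 - u)) x :> y \<and> y \<le> 0"
    using assms by (intro exI[of _ "- x * exp x"]) (auto intro!: derivative_eq_intros simp: algebra_simps)
qed (intro continuous_intros)

definition obj_slope :: "real \<Rightarrow> real \<Rightarrow> real \<Rightarrow> real" where
  "obj_slope \<theta> \<beta> a = \<beta> * exp (\<theta> / a) * (1 - \<theta> / a) - 1"

lemma obj_tangent_le:
  fixes \<theta> \<beta> a l :: real
  assumes "0 < a" "0 < l" "0 \<le> \<beta>"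
  shows "obj \<theta> \<beta> a + obj_slope \<theta> \<beta> a * (l - a) \<le> obj \<theta> \<beta> l"
proof -
  have "exp (\<theta>/a) * (1 + (\<theta>/l - \<theta>/a)) \<le> exp (\<theta>/a) * exp (\<theta>/l - \<theta>/a)"
    by (intro mult_left_mono exp_ge_add_one_self) simp
  also have "\<dots> = exp (\<theta>/l)"
    by (simp flip: exp_add)
  finally have "\<beta> * (l * (exp (\<theta>/a) * (1 + (\<theta>/l - \<theta>/a)))) \<le> \<beta> * (l * exp (\<theta>/l))"
    using assms by (intro mult_left_mono) auto
  moreover have "obj \<theta> \<beta> a + obj_slope \<theta> \<beta> a * (l - a)
      = \<beta> * (l * (exp (\<theta>/a) * (1 + (\<theta>/l - \<theta>/a)))) - l"
    using assms unfolding obj_def obj_slope_def by (simp add: field_simps)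
  ultimately show ?thesis
    unfolding obj_def by (simp add: algebra_simps)
qed

lemma lagrangian_le_of_slope:
  fixes \<theta> \<beta> a l c :: real
  assumes "0 < a" "0 < l" "0 \<le> \<beta>" "0 \<le> (obj_slope \<theta> \<beta> a + c) * (l - a)"
  shows "obj \<theta> \<beta> a + c * a \<le> obj \<theta> \<beta> l + c * l"
  using obj_tangent_le[OF assms(1-3), of \<theta>] assms(4) by (simp add: algebra_simps)

lemma lagrangian_minimizer_antimono:
  fixes F :: "real \<Rightarrow> real" and a b p q :: real
  assumes "F a + p * a \<le> F b + p * b" "F b + q * b \<le> F a + q * a" "q < p"
  shows "a \<le> b"
proof -
  have "(p - q) * (a - b) \<le> 0"
    using assms(1,2) by (simp add: algebra_simps)
  then show ?thesis
    using assms(3) by (simp add: mult_le_0_iff)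
qed

lemma obj_slope_inverse_antimono:
  fixes \<theta> \<beta> s t :: real
  assumes "0 \<le> \<theta>" "0 \<le> \<beta>" "0 \<le> s" "s \<le> t"
  shows "obj_slope \<theta> \<beta> (1/t) \<le> obj_slope \<theta> \<beta> (1/s)"
  using exp_mult_one_minus_antimono[of "\<theta> * s" "\<theta> * t"] assms
  by (simp add: obj_slope_def mult_left_mono mult.assoc mult_mono)

lemma abs_obj_le:
  fixes \<theta> \<beta> \<tau> T l :: real
  assumes "0 < T" "0 \<le> \<theta>" "0 \<le> \<beta>" "1/T \<le> l" "l \<le> 1/\<tau>"
  shows "\<bar>obj \<theta> \<beta> l\<bar> \<le> (\<beta> * exp (\<theta> * T) + 1) / \<tau>"
proof -
  have l: "0 < l"
    using assms(1,4) by (smt (verit) divide_pos_pos)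
  have "1 \<le> T * l"
    using assms(1,4) by (simp add: field_simps)
  then have "\<theta> * 1 \<le> \<theta> * (T * l)"
    using assms(2) by (rule mult_left_mono)
  then have "\<theta> / l \<le> \<theta> * T"
    using l by (simp add: divide_simps mult.assoc)
  then have "\<bar>\<beta> * exp (\<theta> / l) - 1\<bar> \<le> \<beta> * exp (\<theta> * T) + 1"
    using assms(3) by (smt (verit) exp_le_cancel_iff exp_gt_zero mult_left_mono mult_nonneg_nonneg)
  moreover have "0 \<le> 1/\<tau>"
    using l assms(5) by linarith
  ultimately have "l * \<bar>\<beta> * exp (\<theta> / l) - 1\<bar> \<le> (1/\<tau>) * (\<beta> * exp (\<theta> * T) + 1)"
    using l assms(5) by (intro mult_mono) auto
  then show ?thesis
    using l unfolding obj_def by (simp add: abs_mult)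
qed

lemma gamma_th_iff_obj_slope:
  fixes \<theta> \<beta> \<eta> t x :: real
  assumes "0 < x" "obj_slope \<theta> \<beta> (1/t) < 0"
  shows "x < gamma_th \<theta> \<beta> \<eta> t \<longleftrightarrow> 0 < obj_slope \<theta> \<beta> (1/t) + \<eta> / x"
    and "x \<le> gamma_th \<theta> \<beta> \<eta> t \<longleftrightarrow> 0 \<le> obj_slope \<theta> \<beta> (1/t) + \<eta> / x"
  using assms unfolding gamma_th_def obj_slope_def
  by (auto simp: field_simps)

(* The Lambert W argument in lambda_opt lies above the value of w e^w at w = \<theta> t - 1
   exactly when the Lagrangian slope at 1/t is nonnegative. *)
lemma lambertW_argument_offset:
  fixes \<theta> \<beta> \<eta> t x :: real
  assumes "x \<noteq> 0" "\<beta> \<noteq> 0"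
  shows "(\<eta> - x) / (exp 1 * \<beta> * x) - (\<theta> * t - 1) * exp (\<theta> * t - 1)
    = (obj_slope \<theta> \<beta> (1/t) + \<eta> / x) / (exp 1 * \<beta>)"
  using assms unfolding obj_slope_def by (simp add: exp_diff field_simps)

lemma rate_constraints_iff:
  fixes \<tau> T l :: real
  assumes "0 < \<tau>" "0 < T"
  shows "(\<tau> * l \<le> 1 \<and> 1 \<le> T * l) \<longleftrightarrow> (1/T \<le> l \<and> l \<le> 1/\<tau>)"
  using assms by (auto simp: field_simps)

lemma feasible_bounds:
  assumes "feasible f P \<tau> T lam" "0 < \<tau>" "0 < T" "0 < x"
  shows "1/T \<le> lam x \<and> lam x \<le> 1/\<tau>"
  using assms rate_constraints_iff[of \<tau> T] unfolding feasible_def by blast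

context
  fixes \<theta> \<beta> \<eta> \<tau> T :: real
  assumes \<theta>_pos: "0 < \<theta>" and \<beta>_pos: "0 < \<beta>" and \<tau>_pos: "0 < \<tau>" and \<tau>_lt_T: "\<tau> < T"
    and slope_\<tau>_neg: "obj_slope \<theta> \<beta> (1/\<tau>) < 0" and \<eta>_nonneg: "0 \<le> \<eta>"
begin

lemma obj_slope_inverse_T_neg: "obj_slope \<theta> \<beta> (1/T) < 0"
  using obj_slope_inverse_antimono[of \<theta> \<beta> \<tau> T] slope_\<tau>_neg \<theta>_pos \<beta>_pos \<tau>_pos \<tau>_lt_T
  by linarith

lemma lambda_opt_interior:
  assumes x: "0 < x" and "gamma_th \<theta> \<beta> \<eta> T \<le> x" "x \<le> gamma_th \<theta> \<beta> \<eta> \<tau>"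
  shows "1/T \<le> lambda_opt \<theta> \<beta> \<eta> \<tau> T x \<and> lambda_opt \<theta> \<beta> \<eta> \<tau> T x \<le> 1/\<tau> \<and>
    obj_slope \<theta> \<beta> (lambda_opt \<theta> \<beta> \<eta> \<tau> T x) + \<eta> / x = 0"
proof -
  define y where "y = (\<eta> - x) / (exp 1 * \<beta> * x)"
  define w where "w = lambertW y"
  have "obj_slope \<theta> \<beta> (1/T) + \<eta> / x \<le> 0" "0 \<le> obj_slope \<theta> \<beta> (1/\<tau>) + \<eta> / x"
    using gamma_th_iff_obj_slope[OF x obj_slope_inverse_T_neg, of \<eta>]
      gamma_th_iff_obj_slope[OF x slope_\<tau>_neg, of \<eta>] assms
    by linarith+
  then have "y \<le> (\<theta> * T - 1) * exp (\<theta> * T - 1)" "(\<theta> * \<tau> - 1) * exp (\<theta> * \<tau> - 1) \<le> y"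
    using lambertW_argument_offset[of x \<beta> \<eta> \<theta>] x \<beta>_pos unfolding y_def
    by (smt (verit) divide_nonneg_pos divide_nonpos_pos exp_gt_zero mult_pos_pos)+
  then have w: "\<theta> * \<tau> - 1 \<le> w" "w \<le> \<theta> * T - 1" "w * exp w = y"
    using lambertW_between[of "\<theta> * \<tau> - 1" "\<theta> * T - 1" y] \<theta>_pos \<tau>_pos \<tau>_lt_T
    unfolding w_def by auto
  have pos: "0 < 1 + w"
    using w(1) \<theta>_pos \<tau>_pos by (smt (verit) mult_pos_pos)
  have L: "lambda_opt \<theta> \<beta> \<eta> \<tau> T x = \<theta> / (1 + w)"
    using assms unfolding lambda_opt_def w_def y_def by simp
  have bounds: "1/T \<le> \<theta> / (1 + w)" "\<theta> / (1 + w) \<le> 1/\<tau>"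
    using w pos \<theta>_pos \<tau>_pos \<tau>_lt_T by (simp_all add: divide_simps)
  have "\<theta> / (\<theta> / (1 + w)) = 1 + w"
    using pos \<theta>_pos by simp
  then have "obj_slope \<theta> \<beta> (\<theta> / (1 + w)) = - exp 1 * \<beta> * (w * exp w) - 1"
    unfolding obj_slope_def by (simp add: exp_add algebra_simps)
  also have "\<dots> = - \<eta> / x"
    using w(3) x \<beta>_pos unfolding y_def by (simp add: field_simps)
  finally show ?thesis
    using L bounds by simp
qed

lemma lambda_opt_kkt:
  assumes x: "0 < x"
  shows "1/T \<le> lambda_opt \<theta> \<beta> \<eta> \<tau> T x \<and> lambda_opt \<theta> \<beta> \<eta> \<tau> T x \<le> 1/\<tau> \<and>
    (\<forall>l\<in>{1/T..1/\<tau>}.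
      0 \<le> (obj_slope \<theta> \<beta> (lambda_opt \<theta> \<beta> \<eta> \<tau> T x) + \<eta> / x) * (l - lambda_opt \<theta> \<beta> \<eta> \<tau> T x))"
proof -
  have bounds: "1/T \<le> 1/\<tau>"
    using \<tau>_pos \<tau>_lt_T by (simp add: frac_le)
  consider "x < gamma_th \<theta> \<beta> \<eta> T"
    | "gamma_th \<theta> \<beta> \<eta> T \<le> x" "x \<le> gamma_th \<theta> \<beta> \<eta> \<tau>"
    | "gamma_th \<theta> \<beta> \<eta> \<tau> < x"
    by linarith
  then show ?thesis
  proof cases
    case 1
    then have "lambda_opt \<theta> \<beta> \<eta> \<tau> T x = 1/T" "0 < obj_slope \<theta> \<beta> (1/T) + \<eta> / x"
      using gamma_th_iff_obj_slope(1)[OF x obj_slope_inverse_T_neg, of \<eta>] unfolding lambda_opt_def by auto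
    then show ?thesis
      using bounds by auto
  next
    case 2
    then show ?thesis
      using lambda_opt_interior[OF x] by simp
  next
    case 3
    then have neg: "obj_slope \<theta> \<beta> (1/\<tau>) + \<eta> / x < 0"
      using gamma_th_iff_obj_slope(2)[OF x slope_\<tau>_neg, of \<eta>] by auto
    moreover have "obj_slope \<theta> \<beta> (1/T) \<le> obj_slope \<theta> \<beta> (1/\<tau>)"
      using obj_slope_inverse_antimono \<theta>_pos \<beta>_pos \<tau>_pos \<tau>_lt_T by simp
    ultimately have "\<not> x < gamma_th \<theta> \<beta> \<eta> T"
      using gamma_th_iff_obj_slope(1)[OF x obj_slope_inverse_T_neg, of \<eta>] by auto
    with 3 neg have "lambda_opt \<theta> \<beta> \<eta> \<tau> T x = 1/\<tau>" "obj_slope \<theta> \<beta> (1/\<tau>) + \<eta> / x < 0"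
      unfolding lambda_opt_def by auto
    then show ?thesis
      using bounds by (auto intro: mult_nonpos_nonpos)
  qed
qed

lemma lambda_opt_pos: "0 < x \<Longrightarrow> 0 < lambda_opt \<theta> \<beta> \<eta> \<tau> T x"
  using lambda_opt_kkt[of x] \<tau>_pos \<tau>_lt_T by (smt (verit) divide_pos_pos)

lemma lambda_opt_minimizes_lagrangian:
  assumes "0 < x" "1/T \<le> l" "l \<le> 1/\<tau>"
  shows "obj \<theta> \<beta> (lambda_opt \<theta> \<beta> \<eta> \<tau> T x) + \<eta> / x * lambda_opt \<theta> \<beta> \<eta> \<tau> T x
    \<le> obj \<theta> \<beta> l + \<eta> / x * l"
proof (rule lagrangian_le_of_slope)
  show "0 < lambda_opt \<theta> \<beta> \<eta> \<tau> T x"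
    using lambda_opt_pos[OF assms(1)] .
  show "0 < l"
    using assms(2) \<tau>_pos \<tau>_lt_T by (smt (verit) divide_pos_pos)
  show "0 \<le> (obj_slope \<theta> \<beta> (lambda_opt \<theta> \<beta> \<eta> \<tau> T x) + \<eta> / x) * (l - lambda_opt \<theta> \<beta> \<eta> \<tau> T x)"
    using lambda_opt_kkt[OF assms(1)] assms(2,3) by simp
qed (use \<beta>_pos in simp)

lemma lambda_opt_mono_on_pos: "mono_on {0<..} (lambda_opt \<theta> \<beta> \<eta> \<tau> T)"
proof (cases "\<eta> = 0")
  case True
  then have "\<forall>x>0. lambda_opt \<theta> \<beta> \<eta> \<tau> T x = 1/\<tau>"
    unfolding lambda_opt_def gamma_th_def by simp
  then show ?thesis
    by (simp add: mono_on_def)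
next
  case False
  let ?L = "lambda_opt \<theta> \<beta> \<eta> \<tau> T"
  show ?thesis
  proof (rule mono_onI)
    fix x y :: real
    assume "x \<in> {0<..}" "y \<in> {0<..}" "x \<le> y"
    then have x: "0 < x" and y: "0 < y"
      by simp_all
    show "?L x \<le> ?L y"
    proof (cases "x = y")
      case False
      with \<open>x \<le> y\<close> have "\<eta> / y < \<eta> / x"
        using x \<eta>_nonneg \<open>\<eta> \<noteq> 0\<close> by (simp add: divide_strict_left_mono)
      moreover have "1/T \<le> ?L x" "?L x \<le> 1/\<tau>" "1/T \<le> ?L y" "?L y \<le> 1/\<tau>"
        using lambda_opt_kkt[OF x] lambda_opt_kkt[OF y] by auto
      then have "obj \<theta> \<beta> (?L x) + \<eta> / x * ?L x \<le> obj \<theta> \<beta> (?L y) + \<eta> / x * ?L y"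
        and "obj \<theta> \<beta> (?L y) + \<eta> / y * ?L y \<le> obj \<theta> \<beta> (?L x) + \<eta> / y * ?L x"
        using lambda_opt_minimizes_lagrangian[OF x] lambda_opt_minimizes_lagrangian[OF y] by blast+
      ultimately show ?thesis
        by (rule lagrangian_minimizer_antimono[where F = "obj \<theta> \<beta>", rotated 2])
    qed simp
  qed
qed

lemma lambda_opt_neg:
  assumes "x < 0"
  shows "lambda_opt \<theta> \<beta> \<eta> \<tau> T x = 1/T"
proof -
  have "0 \<le> gamma_th \<theta> \<beta> \<eta> T"
    using obj_slope_inverse_T_neg \<eta>_nonneg unfolding gamma_th_def obj_slope_def by simp
  with assms show ?thesis
    unfolding lambda_opt_def by simp
qed

lemma lambda_opt_measurable: "lambda_opt \<theta> \<beta> \<eta> \<tau> T \<in> borel_measurable borel"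
proof (rule borel_measurable_piecewise_mono[of "{{..<0}, {0}, {0<..}}"])
  \<comment> \<open>The value at 0 comes from the junk division by 0, so 0 is a piece of its own.\<close>
  show "mono_on c (lambda_opt \<theta> \<beta> \<eta> \<tau> T)" if "c \<in> {{..<0}, {0}, {0<..}}" for c
    using that lambda_opt_mono_on_pos by (auto simp: mono_on_def lambda_opt_neg)
qed auto

lemma lambda_opt_feasible:
  assumes "(\<integral>\<^sup>+x. ennreal (lambda_opt \<theta> \<beta> \<eta> \<tau> T x / x * f x) \<partial>lborel) \<le> ennreal P"
  shows "feasible f P \<tau> T (lambda_opt \<theta> \<beta> \<eta> \<tau> T)"
  using lambda_opt_measurable lambda_opt_kkt rate_constraints_iff[of \<tau> T] \<tau>_pos \<tau>_lt_T assms
  unfolding feasible_def by auto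

lemma lambda_opt_lagrangian_le_feasible:
  assumes "feasible f P \<tau> T lam"
  shows "\<forall>x>0. obj \<theta> \<beta> (lambda_opt \<theta> \<beta> \<eta> \<tau> T x) + \<eta> * (lambda_opt \<theta> \<beta> \<eta> \<tau> T x / x)
    \<le> obj \<theta> \<beta> (lam x) + \<eta> * (lam x / x)"
proof (intro allI impI)
  fix x :: real
  assume "0 < x"
  then have "1/T \<le> lam x \<and> lam x \<le> 1/\<tau>"
    using feasible_bounds[OF assms \<tau>_pos] \<tau>_pos \<tau>_lt_T by simp
  with \<open>0 < x\<close> have "obj \<theta> \<beta> (lambda_opt \<theta> \<beta> \<eta> \<tau> T x) + \<eta> / x * lambda_opt \<theta> \<beta> \<eta> \<tau> T x
      \<le> obj \<theta> \<beta> (lam x) + \<eta> / x * lam x"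
    using lambda_opt_minimizes_lagrangian by blast
  then show "obj \<theta> \<beta> (lambda_opt \<theta> \<beta> \<eta> \<tau> T x) + \<eta> * (lambda_opt \<theta> \<beta> \<eta> \<tau> T x / x)
      \<le> obj \<theta> \<beta> (lam x) + \<eta> * (lam x / x)"
    by simp
qed

end

lemma integrable_mult_bounded_on_pos:
  fixes f g :: "real \<Rightarrow> real"
  assumes f: "integrable lborel f" and g: "g \<in> borel_measurable borel"
    and f_neg: "\<forall>x<0. f x = 0" and g_bound: "\<forall>x>0. \<bar>g x\<bar> \<le> C"
  shows "integrable lborel (\<lambda>x. g x * f x)"
proof (rule Bochner_Integration.integrable_bound[where f = "\<lambda>x. C * f x"])
  show "integrable lborel (\<lambda>x. C * f x)"
    using f by simp
  show "(\<lambda>x. g x * f x) \<in> borel_measurable lborel"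
    using f g by measurable
  show "AE x in lborel. norm (g x * f x) \<le> norm (C * f x)"
    using AE_lborel_singleton[of 0]
  proof eventually_elim
    case (elim x)
    show ?case
    proof (cases "x < 0")
      case False
      with elim have "0 < x"
        by simp
      then have "\<bar>g x\<bar> \<le> \<bar>C\<bar>"
        by (meson g_bound abs_ge_self order_trans)
      then have "\<bar>g x\<bar> * \<bar>f x\<bar> \<le> \<bar>C\<bar> * \<bar>f x\<bar>"
        by (rule mult_right_mono) simp
      then show ?thesis
        by (simp add: abs_mult)
    qed (use f_neg in simp)
  qed
qed

lemma integrable_integral_le_of_nn_integral_le:
  fixes h :: "real \<Rightarrow> real"
  assumes "h \<in> borel_measurable borel" "\<forall>x. 0 \<le> h x"
    and "(\<integral>\<^sup>+x. ennreal (h x) \<partial>lborel) \<le> ennreal P" "0 \<le> P"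
  shows "integrable lborel h \<and> integral\<^sup>L lborel h \<le> P"
proof
  show int: "integrable lborel h"
  proof (rule integrableI_nonneg)
    show "(\<integral>\<^sup>+x. ennreal (h x) \<partial>lborel) < \<infinity>"
      using le_less_trans[OF assms(3) ennreal_less_top] by simp
  qed (use assms(1,2) in simp_all)
  have "ennreal (integral\<^sup>L lborel h) \<le> ennreal P"
    using assms(2,3) nn_integral_eq_integral[OF int] by simp
  then show "integral\<^sup>L lborel h \<le> P"
    using assms(4) by (simp add: ennreal_le_iff)
qed

lemma div_mult_density_nonneg:
  fixes f g :: "real \<Rightarrow> real"
  assumes "\<forall>x. 0 \<le> f x" "\<forall>x<0. f x = 0" "\<forall>x>0. 0 \<le> g x"
  shows "0 \<le> g x / x * f x"
  using assms by (cases x "0::real" rule: linorder_cases) auto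

lemma feasible_expect:
  fixes f lam :: "real \<Rightarrow> real" and \<theta> \<beta> P \<tau> T :: real
  assumes feas: "feasible f P \<tau> T lam"
    and f_meas: "f \<in> borel_measurable borel" and f_int: "integrable lborel f"
    and f_nonneg: "\<forall>x. 0 \<le> f x" and f_neg: "\<forall>x<0. f x = 0"
    and "0 < \<tau>" "\<tau> < T" "0 \<le> \<theta>" "0 \<le> \<beta>" "0 \<le> P"
  shows "integrable lborel (\<lambda>x. obj \<theta> \<beta> (lam x) * f x)"
    and "integrable lborel (\<lambda>x. lam x / x * f x)"
    and "expect f (\<lambda>x. lam x / x) \<le> P"
proof -
  have meas: "lam \<in> borel_measurable borel"
    and power: "(\<integral>\<^sup>+x. ennreal (lam x / x * f x) \<partial>lborel) \<le> ennreal P"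
    using feas unfolding feasible_def by auto
  have bounds: "\<forall>x>0. 1/T \<le> lam x \<and> lam x \<le> 1/\<tau>"
    using feasible_bounds[OF feas] assms(6,7) by simp
  have "(\<lambda>x. obj \<theta> \<beta> (lam x)) \<in> borel_measurable borel"
    using meas unfolding obj_def by measurable
  moreover have "\<forall>x>0. \<bar>obj \<theta> \<beta> (lam x)\<bar> \<le> (\<beta> * exp (\<theta> * T) + 1) / \<tau>"
    using bounds abs_obj_le[of T \<theta> \<beta>] assms(6-9) by simp
  ultimately show "integrable lborel (\<lambda>x. obj \<theta> \<beta> (lam x) * f x)"
    by (rule integrable_mult_bounded_on_pos[OF f_int _ f_neg])
  have "\<forall>x>0. 0 \<le> lam x"
    using bounds assms(6,7) by (smt (verit) divide_pos_pos)
  then have "\<forall>x. 0 \<le> lam x / x * f x"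
    using div_mult_density_nonneg f_nonneg f_neg by blast
  moreover have "(\<lambda>x. lam x / x * f x) \<in> borel_measurable borel"
    using meas f_meas by measurable
  ultimately show "integrable lborel (\<lambda>x. lam x / x * f x)" "expect f (\<lambda>x. lam x / x) \<le> P"
    using integrable_integral_le_of_nn_integral_le[OF _ _ power assms(10)]
    unfolding expect_def by blast+
qed

lemma expect_div_eq_of_nn_integral_eq:
  fixes f g :: "real \<Rightarrow> real"
  assumes "g \<in> borel_measurable borel" "f \<in> borel_measurable borel"
    and "\<forall>x. 0 \<le> f x" "\<forall>x<0. f x = 0" "\<forall>x>0. 0 \<le> g x"
    and "(\<integral>\<^sup>+x. ennreal (g x / x * f x) \<partial>lborel) = ennreal P" "0 \<le> P"
  shows "expect f (\<lambda>x. g x / x) = P"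
proof -
  have "(\<lambda>x. g x / x * f x) \<in> borel_measurable borel"
    using assms(1,2) by measurable
  then have "has_bochner_integral lborel (\<lambda>x. g x / x * f x) P"
    using div_mult_density_nonneg[OF assms(3-5)] assms(6,7)
    by (intro has_bochner_integral_nn_integral) auto
  then show ?thesis
    unfolding expect_def by (simp add: has_bochner_integral_integral_eq)
qed

lemma expect_le_by_lagrangian:
  fixes f a b p q :: "real \<Rightarrow> real" and \<eta> :: real
  assumes ia: "integrable lborel (\<lambda>x. a x * f x)" and ib: "integrable lborel (\<lambda>x. b x * f x)"
    and ip: "integrable lborel (\<lambda>x. p x * f x)" and iq: "integrable lborel (\<lambda>x. q x * f x)"
    and f_nonneg: "\<forall>x. 0 \<le> f x" and f_neg: "\<forall>x<0. f x = 0"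
    and pointwise: "\<forall>x>0. a x + \<eta> * p x \<le> b x + \<eta> * q x"
    and "0 \<le> \<eta>" and "expect f q \<le> expect f p"
  shows "expect f a \<le> expect f b"
proof -
  have "expect f a + \<eta> * expect f p = (\<integral>x. a x * f x + \<eta> * (p x * f x) \<partial>lborel)"
    unfolding expect_def using ia ip by simp
  also have "\<dots> \<le> (\<integral>x. b x * f x + \<eta> * (q x * f x) \<partial>lborel)"
  proof (rule integral_mono_AE)
    show "AE x in lborel. a x * f x + \<eta> * (p x * f x) \<le> b x * f x + \<eta> * (q x * f x)"
      using AE_lborel_singleton[of 0]
    proof eventually_elim
      case (elim x)
      show ?case
      proof (cases "x < 0")
        case False
        with elim have "(a x + \<eta> * p x) * f x \<le> (b x + \<eta> * q x) * f x"
          using pointwise f_nonneg by (intro mult_right_mono) auto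
        then show ?thesis
          by (simp add: algebra_simps)
      qed (use f_neg in simp)
    qed
  qed (use ia ib ip iq in auto)
  also have "\<dots> = expect f b + \<eta> * expect f q"
    unfolding expect_def using ib iq by simp
  finally show ?thesis
    using assms(8,9) by (smt (verit) mult_left_mono)
qed

theorem theorem1:
  fixes f :: "real \<Rightarrow> real" and \<theta> \<beta> P\<tau> \<tau> T \<eta> :: real
  assumes f_meas: "f \<in> borel_measurable borel"
    and f_nonneg: "\<forall>x. 0 \<le> f x"
    and f_supp: "\<forall>x<0. f x = 0"
    and f_total: "(\<integral>\<^sup>+x. ennreal (f x) \<partial>lborel) = 1"
    and \<theta>_pos: "0 < \<theta>" and \<beta>_pos: "0 < \<beta>" and P_pos: "0 < P\<tau>"
    and \<tau>_pos: "0 < \<tau>" and \<tau>_lt_T: "\<tau> < T"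
    and thresholds_wd: "0 < 1 - \<beta> * exp (\<theta> * \<tau>) * (1 - \<theta> * \<tau>)"
    and \<eta>_nonneg: "0 \<le> \<eta>"
    and \<eta>_power: "(\<integral>\<^sup>+x. ennreal (lambda_opt \<theta> \<beta> \<eta> \<tau> T x / x * f x) \<partial>lborel) = ennreal P\<tau>"
  shows "feasible f P\<tau> \<tau> T (lambda_opt \<theta> \<beta> \<eta> \<tau> T) \<and>
         (\<forall>lam. feasible f P\<tau> \<tau> T lam \<longrightarrow>
            expect f (\<lambda>x. obj \<theta> \<beta> (lambda_opt \<theta> \<beta> \<eta> \<tau> T x))
              \<le> expect f (\<lambda>x. obj \<theta> \<beta> (lam x)))"
proof -
  let ?L = "lambda_opt \<theta> \<beta> \<eta> \<tau> T"
  have "obj_slope \<theta> \<beta> (1/\<tau>) < 0"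
    using thresholds_wd unfolding obj_slope_def by simp
  note setting = \<theta>_pos \<beta>_pos \<tau>_pos \<tau>_lt_T this \<eta>_nonneg
  have f_int: "integrable lborel f"
    using f_meas f_nonneg f_total by (intro integrableI_nonneg) auto
  have nonneg: "0 \<le> \<theta>" "0 \<le> \<beta>" "0 \<le> P\<tau>"
    using \<theta>_pos \<beta>_pos P_pos by simp_all
  have feasL: "feasible f P\<tau> \<tau> T ?L"
    using lambda_opt_feasible[OF setting] \<eta>_power by simp
  have powerL: "expect f (\<lambda>x. ?L x / x) = P\<tau>"
    using lambda_opt_measurable[OF setting] lambda_opt_pos[OF setting] \<eta>_power nonneg(3)
    by (intro expect_div_eq_of_nn_integral_eq[OF _ f_meas f_nonneg f_supp]) (auto intro: less_imp_le)
  have "expect f (\<lambda>x. obj \<theta> \<beta> (?L x)) \<le> expect f (\<lambda>x. obj \<theta> \<beta> (lam x))"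
    if feas: "feasible f P\<tau> \<tau> T lam" for lam
  proof -
    note expectL = feasible_expect[OF feasL f_meas f_int f_nonneg f_supp \<tau>_pos \<tau>_lt_T nonneg]
    note expect = feasible_expect[OF feas f_meas f_int f_nonneg f_supp \<tau>_pos \<tau>_lt_T nonneg]
    show ?thesis
      by (rule expect_le_by_lagrangian[OF expectL(1) expect(1) expectL(2) expect(2) f_nonneg f_supp
            lambda_opt_lagrangian_le_feasible[OF setting feas] \<eta>_nonneg]) (use powerL expect(3) in simp)
  qed
  with feasL show ?thesis
    by blast
qed

end
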